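(* Let $n\ge 2$ (integer), $\alpha>0$, $\beta>0$, $R>0$. Then \[ Z_n=\int_{\mathbb{C}^n}\exp\Big(-\beta\Big(\sum_{i<j}-\log|x_i-x_j|-\alpha\sum_{i=1}^n U_\rho(x_i)\Big)\Big)\,\mathrm{d}\ell_{\mathbb{C}}(x_1)\cdots\mathrm{d}\ell_{\mathbb{C}}(x_n)<\infty \quad\text{if and only if}\quad \alpha-n>\frac{2}{\beta}-1 . \] Moreover, the potential $V=-\frac{\alpha}{n}U_\rho$ is given explicitly by \[ V(x)=\frac{\alpha}{2n}\Big(\frac{|x|^2}{R^2}-1+2\log R\Big)\mathbf{1}_{|x|\le R}+\frac{\alpha}{n}\log|x|\,\mathbf{1}_{|x|>R}. \] In particular, when $\beta=2$ the condition reads $\alpha>n$, and when $\alpha=n$ it reads $\beta>2$.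
   Context: $\ell_{\mathbb{C}}$ denotes Lebesgue measure on $\mathbb{C}=\mathbb{R}^2$. $\rho$ is the uniform probability measure on the closed disc $D_R=\{z\in\mathbb{C}:|z|\le R\}$, and $U_\rho(x)=-\int\log|x-y|\,\mathrm{d}\rho(y)$ is its logarithmic potential. The model is the planar Coulomb gas with $n$ particles, inverse temperature $\beta$ and external potential $V=-\frac{\alpha}{n}U_\rho$: its energy is $E_n(x_1,\dots,x_n)=\sum_{i<j}-\log|x_i-x_j|+n\sum_{i=1}^nV(x_i)$, its partition function is $Z_n=\int_{\mathbb{C}^n}e^{-\beta E_n}\,\mathrm{d}\ell_{\mathbb{C}}^{\otimes n}$, and when $Z_n<\infty$ its law is $P_n=Z_n^{-1}e^{-\beta E_n}\,\mathrm{d}\ell_{\mathbb{C}}^{\otimes n}$ on $\mathbb{C}^n$. *)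

theory Defs
  imports "HOL-Analysis.Analysis"
begin

definition unif_disc :: "real \<Rightarrow> complex measure" where
  "unif_disc R = uniform_measure lborel (cball 0 R)"

definition log_pot :: "real \<Rightarrow> complex \<Rightarrow> real" where
  "log_pot R x = - (\<integral>y. ln (cmod (x - y)) \<partial>unif_disc R)"

definition ext_pot :: "nat \<Rightarrow> real \<Rightarrow> real \<Rightarrow> complex \<Rightarrow> real" where
  "ext_pot n \<alpha> R x = - (\<alpha> / real n) * log_pot R x"

definition energy :: "nat \<Rightarrow> real \<Rightarrow> real \<Rightarrow> (nat \<Rightarrow> complex) \<Rightarrow> real" where
  "energy n \<alpha> R x =
     (\<Sum>j<n. \<Sum>i<j. - ln (cmod (x i - x j))) + real n * (\<Sum>i<n. ext_pot n \<alpha> R (x i))"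

definition partition_fn :: "nat \<Rightarrow> real \<Rightarrow> real \<Rightarrow> real \<Rightarrow> ennreal" where
  "partition_fn n \<beta> \<alpha> R =
     (\<integral>\<^sup>+ x. ennreal (exp (- \<beta> * energy n \<alpha> R x)) \<partial>(PiM {..<n} (\<lambda>_. (lborel :: complex measure))))"

end

theory Submission
  imports Defs "HOL-Complex_Analysis.Complex_Analysis" "HOL-Real_Asymp.Real_Asymp"
begin

text \<open>
  By rotation invariance of the uniform measure \<rho>, the integral of ln |x - y| d\<rho>(y) equals its
  average over all rotations of y. Gauss's mean value property of the harmonic function ln |1 - w|
  on the unit disc makes the circle mean of ln |x - y| equal to ln (max |x| |y|) (Newton's theorem),
  and the remaining radial integral is elementary.

  Since \<open>|x\<^sub>i - x\<^sub>j| \<le> (1 + |x\<^sub>i|) (1 + |x\<^sub>j|)\<close>, \<open>exp (- \<beta> E\<^sub>n)\<close> is bounded by a product of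
  one-particle weights that behave like |z| powr (- q), q = \<beta> (\<alpha> - n + 1), at infinity, and these
  are integrable over the plane iff q > 2. Conversely, keeping n - 1 particles in small discs around
  well separated points and letting the last one escape bounds \<open>Z\<^sub>n\<close> from below by a multiple of
  the integral of |z| powr (- q) over |z| \<ge> M, which diverges for q \<le> 2.
\<close>

section \<open>Circle means of the logarithm\<close>

lemma circle_mean_ln_norm_one_minus:
  fixes v :: complex
  assumes "cmod v < 1"
  shows "((\<lambda>t. ln (cmod (1 - v * exp (2 * of_real pi * \<i> * of_real t)))) has_integral 0) {0..1}"
proof (cases "v = 0")
  case True
  then show ?thesis by simp
next
  case False
  define S where "S = ball (0::complex) (1 / cmod v)"
  have Re_pos: "0 < Re (1 - v * w)" if "w \<in> S" for w
  proof -
    have "cmod (v * w) < 1" using that False by (simp add: S_def norm_mult field_simps)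
    then show ?thesis using complex_Re_le_cmod[of "v * w"] by simp
  qed
  have "(\<lambda>w. Ln (1 - v * w)) holomorphic_on S"
    by (intro holomorphic_intros) (auto dest!: Re_pos simp: complex_nonpos_Reals_iff)
  \<comment> \<open>Cauchy's formula at the centre: the mean of the holomorphic branch over the circle is its value 0 at 0.\<close>
  then have "((\<lambda>w. Ln (1 - v * w) / (w - 0)) has_contour_integral
          (2 * pi * \<i> * winding_number (circlepath 0 1) 0 * Ln (1 - v * 0))) (circlepath 0 1)"
    by (intro Cauchy_integral_formula_convex_simple)
       (use assms False in \<open>auto simp: S_def field_simps\<close>)
  then have "((\<lambda>t. Ln (1 - v * circlepath 0 1 t) / circlepath 0 1 t *
                     vector_derivative (circlepath 0 1) (at t)) has_integral 0) {0..1}"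
    by (simp add: has_contour_integral)
  then have "((\<lambda>t. 2 * pi * \<i> * Ln (1 - v * exp (2 * of_real pi * \<i> * of_real t))) has_integral 0) {0..1}"
    unfolding vector_derivative_circlepath by (simp add: circlepath field_simps)
  then have Ln_mean: "((\<lambda>t. Ln (1 - v * exp (2 * of_real pi * \<i> * of_real t))) has_integral 0) {0..1}"
    by (subst (asm) has_integral_mult_right_iff) auto
  have Re_Ln: "Re (Ln (1 - v * exp (2 * of_real pi * \<i> * of_real t))) =
      ln (cmod (1 - v * exp (2 * of_real pi * \<i> * of_real t)))" for t
  proof -
    have "cmod (v * exp (2 * of_real pi * \<i> * of_real t)) < 1"
      using assms by (simp add: norm_mult)
    then have "1 - v * exp (2 * of_real pi * \<i> * of_real t) \<noteq> 0" by auto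
    then show ?thesis by simp
  qed
  from has_integral_Re[OF Ln_mean] show ?thesis by (simp add: Re_Ln)
qed

lemma circle_mean_ln_norm_one_minus_cnj:
  fixes v :: complex
  assumes "cmod v < 1"
  shows "((\<lambda>t. ln (cmod (1 - v * cnj (exp (2 * of_real pi * \<i> * of_real t))))) has_integral 0) {0..1}"
proof -
  have "cmod (1 - v * cnj e) = cmod (1 - cnj v * e)" for e
    by (metis complex_cnj_cnj complex_cnj_diff complex_cnj_mult complex_cnj_one complex_mod_cnj)
  then show ?thesis using circle_mean_ln_norm_one_minus[of "cnj v"] assms by simp
qed

lemma circle_mean_ln_norm_diff:
  fixes x y :: complex
  assumes "cmod y \<noteq> cmod x"
  shows "((\<lambda>t. ln (cmod (x - exp (2 * of_real pi * \<i> * of_real t) * y))) has_integral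
           ln (max (cmod x) (cmod y))) {0..1}"
proof -
  let ?e = "\<lambda>t::real. exp (2 * of_real pi * \<i> * of_real t)"
  have e_cnj: "?e t * cnj (?e t) = 1" for t
    by (simp add: complex_mult_cnj cmod_power2[symmetric])
  consider "y = 0" | "x = 0" | "x \<noteq> 0" "cmod y < cmod x" | "y \<noteq> 0" "cmod x < cmod y"
    using assms by fastforce
  then show ?thesis
  proof cases
    case 1
    then show ?thesis using has_integral_const_real[of "ln (cmod x)" 0 1] by simp
  next
    case 2
    then show ?thesis using has_integral_const_real[of "ln (cmod y)" 0 1] by (simp add: norm_mult)
  next
    case 3
    have "cmod (y / x) < 1" using 3 by (simp add: norm_divide)
    from has_integral_add[OF has_integral_const_real circle_mean_ln_norm_one_minus[OF this]]
    have "((\<lambda>t. ln (cmod x) + ln (cmod (1 - y / x * ?e t))) has_integral ln (cmod x)) {0..1}"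
      by simp
    moreover have "ln (cmod (x - ?e t * y)) = ln (cmod x) + ln (cmod (1 - y / x * ?e t))" for t
    proof -
      have "cmod (y / x * ?e t) < 1" using \<open>cmod (y / x) < 1\<close> by (simp add: norm_mult norm_divide)
      then have "1 - y / x * ?e t \<noteq> 0" by auto
      moreover have "x - ?e t * y = x * (1 - y / x * ?e t)" using 3 by (simp add: field_simps)
      ultimately show ?thesis using 3 by (simp add: norm_mult ln_mult)
    qed
    ultimately show ?thesis using 3 by (simp add: max_def)
  next
    case 4
    have "cmod (x / y) < 1" using 4 by (simp add: norm_divide)
    from has_integral_add[OF has_integral_const_real circle_mean_ln_norm_one_minus_cnj[OF this]]
    have "((\<lambda>t. ln (cmod y) + ln (cmod (1 - x / y * cnj (?e t)))) has_integral ln (cmod y)) {0..1}"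
      by simp
    moreover have "ln (cmod (x - ?e t * y)) = ln (cmod y) + ln (cmod (1 - x / y * cnj (?e t)))" for t
    proof -
      have "cmod (x / y * cnj (?e t)) < 1" using \<open>cmod (x / y) < 1\<close> by (simp add: norm_mult norm_divide)
      then have "1 - x / y * cnj (?e t) \<noteq> 0" by auto
      moreover have "x - ?e t * y = - (?e t * y) * (1 - x / y * cnj (?e t))"
        using 4 e_cnj[of t] by (simp add: field_simps)
      ultimately show ?thesis using 4 by (simp add: norm_mult ln_mult)
    qed
    ultimately show ?thesis using 4 by (simp add: max_def)
  qed
qed

section \<open>Lebesgue measure on the complex plane\<close>

lemma measurable_Complex_pair [measurable]:
  "(\<lambda>p. Complex (fst p) (snd p)) \<in> borel_measurable (lborel \<Otimes>\<^sub>M lborel :: (real \<times> real) measure)"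
proof -
  have "(\<lambda>p::real \<times> real. of_real (fst p) + \<i> * of_real (snd p) :: complex)
          \<in> borel_measurable (lborel \<Otimes>\<^sub>M lborel)"
    by measurable
  then show ?thesis by (simp add: Complex_eq)
qed

lemma lborel_complex_eq_distr_pair:
  "(lborel :: complex measure) =
     distr (lborel \<Otimes>\<^sub>M lborel :: (real \<times> real) measure) borel (\<lambda>p. Complex (fst p) (snd p))"
proof (rule lborel_eqI)
  fix l u :: complex
  assume le: "\<And>b. b \<in> Basis \<Longrightarrow> l \<bullet> b \<le> u \<bullet> b"
  have Re_le: "Re l \<le> Re u" and Im_le: "Im l \<le> Im u"
    using le[of 1] le[of \<i>] by (auto simp: Basis_complex_def inner_complex_def)
  have "(\<lambda>p. Complex (fst p) (snd p)) -` box l u \<inter> space (lborel \<Otimes>\<^sub>M lborel) =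
      box (Re l) (Re u) \<times> box (Im l) (Im u)"
    by (auto simp: box_def Basis_complex_def inner_complex_def space_pair_measure)
  then have "emeasure (distr (lborel \<Otimes>\<^sub>M lborel) borel (\<lambda>p. Complex (fst p) (snd p))) (box l u) =
      emeasure (lborel \<Otimes>\<^sub>M lborel) (box (Re l) (Re u) \<times> box (Im l) (Im u))"
    by (subst emeasure_distr) auto
  also have "\<dots> = (\<Prod>b\<in>Basis. (u - l) \<bullet> b)"
    using Re_le Im_le
    by (simp add: lborel.emeasure_pair_measure_Times Basis_complex_def inner_complex_def ennreal_mult)
  finally show "emeasure (distr (lborel \<Otimes>\<^sub>M lborel) borel (\<lambda>p. Complex (fst p) (snd p))) (box l u) =
      (\<Prod>b\<in>Basis. (u - l) \<bullet> b)" .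
qed simp

lemma nn_integral_lborel_complex_eq_pair:
  assumes [measurable]: "f \<in> borel_measurable borel"
  shows "(\<integral>\<^sup>+z. f z \<partial>(lborel :: complex measure)) =
           (\<integral>\<^sup>+p. f (Complex (fst p) (snd p)) \<partial>(lborel \<Otimes>\<^sub>M lborel))"
  by (subst lborel_complex_eq_distr_pair) (simp add: nn_integral_distr)

lemma nn_integral_lborel_pair_shear_fst:
  assumes [measurable]: "f \<in> borel_measurable (lborel \<Otimes>\<^sub>M lborel)"
  shows "(\<integral>\<^sup>+p. f (fst p + s * snd p, snd p) \<partial>(lborel \<Otimes>\<^sub>M lborel)) =
           (\<integral>\<^sup>+p. f p \<partial>(lborel \<Otimes>\<^sub>M lborel :: (real \<times> real) measure))"
proof -
  have "(\<integral>\<^sup>+p. f (fst p + s * snd p, snd p) \<partial>(lborel \<Otimes>\<^sub>M lborel)) =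
      (\<integral>\<^sup>+y. \<integral>\<^sup>+x. f (x + s * y, y) \<partial>lborel \<partial>lborel)"
    by (subst lborel_pair.nn_integral_snd[symmetric]) auto
  also have "\<dots> = (\<integral>\<^sup>+y. \<integral>\<^sup>+x. f (x, y) \<partial>lborel \<partial>lborel)"
  proof (rule nn_integral_cong)
    fix y :: real
    show "(\<integral>\<^sup>+x. f (x + s * y, y) \<partial>lborel) = (\<integral>\<^sup>+x. f (x, y) \<partial>lborel)"
      using nn_integral_real_affine[of "\<lambda>x. f (x, y)" 1 "s * y"] by (simp add: add.commute)
  qed
  also have "\<dots> = (\<integral>\<^sup>+p. f p \<partial>(lborel \<Otimes>\<^sub>M lborel))"
    by (rule lborel_pair.nn_integral_snd) auto
  finally show ?thesis .
qed

lemma nn_integral_lborel_pair_shear_snd: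
  assumes [measurable]: "f \<in> borel_measurable (lborel \<Otimes>\<^sub>M lborel)"
  shows "(\<integral>\<^sup>+p. f (fst p, snd p + s * fst p) \<partial>(lborel \<Otimes>\<^sub>M lborel)) =
           (\<integral>\<^sup>+p. f p \<partial>(lborel \<Otimes>\<^sub>M lborel :: (real \<times> real) measure))"
proof -
  have "(\<integral>\<^sup>+p. f (fst p, snd p + s * fst p) \<partial>(lborel \<Otimes>\<^sub>M lborel)) =
      (\<integral>\<^sup>+x. \<integral>\<^sup>+y. f (x, y + s * x) \<partial>lborel \<partial>lborel)"
    by (subst lborel.nn_integral_fst[symmetric]) auto
  also have "\<dots> = (\<integral>\<^sup>+x. \<integral>\<^sup>+y. f (x, y) \<partial>lborel \<partial>lborel)"
  proof (rule nn_integral_cong)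
    fix x :: real
    show "(\<integral>\<^sup>+y. f (x, y + s * x) \<partial>lborel) = (\<integral>\<^sup>+y. f (x, y) \<partial>lborel)"
      using nn_integral_real_affine[of "\<lambda>y. f (x, y)" 1 "s * x"] by (simp add: add.commute)
  qed
  also have "\<dots> = (\<integral>\<^sup>+p. f p \<partial>(lborel \<Otimes>\<^sub>M lborel))"
    by (rule lborel.nn_integral_fst) auto
  finally show ?thesis .
qed

text \<open>A rotation by an angle other than \<open>\<pi>\<close> is the composition of three shears, with
  \<open>t = tan (\<theta>/2)\<close>.\<close>

lemma rotation_eq_three_shears:
  fixes r m t a b :: real
  assumes "r\<^sup>2 + m\<^sup>2 = 1" "1 + r \<noteq> 0" "t = m / (1 + r)"
  defines "a' \<equiv> a - t * b"
  shows "Complex r m * Complex a b = Complex (a' - t * (b + m * a')) (b + m * a')"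
proof -
  have tm: "t * (1 + r) = m" using assms(2,3) by simp
  have "t * m * (1 + r) = (1 - r) * (1 + r)"
    using tm assms(1) by (simp add: power2_eq_square algebra_simps)
  then have tm': "t * m = 1 - r" using assms(2) by simp
  have "a' - t * (b + m * a') = a - 2 * t * b - (t * m) * a + t * (t * m) * b"
    by (simp add: a'_def algebra_simps)
  also have "\<dots> = r * a - t * (1 + r) * b"
    unfolding tm' by (simp add: algebra_simps)
  finally have "r * a - m * b = a' - t * (b + m * a')" using tm by simp
  moreover have "b + m * a' = m * a + (1 - t * m) * b"
    by (simp add: a'_def algebra_simps)
  then have "m * a + r * b = b + m * a'" unfolding tm' by simp
  ultimately show ?thesis by (simp add: complex_eq_iff)
qed

lemma nn_integral_lborel_complex_mult_unimodular:
  fixes c :: complex and f :: "complex \<Rightarrow> ennreal"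
  assumes c: "cmod c = 1" and f [measurable]: "f \<in> borel_measurable borel"
  shows "(\<integral>\<^sup>+z. f (c * z) \<partial>lborel) = (\<integral>\<^sup>+z. f z \<partial>lborel)"
proof -
  have rotate: "(\<integral>\<^sup>+z. g (c * z) \<partial>lborel) = (\<integral>\<^sup>+z. g z \<partial>lborel)"
    if c: "cmod c = 1" "c \<noteq> -1" and [measurable]: "g \<in> borel_measurable borel"
    for c :: complex and g :: "complex \<Rightarrow> ennreal"
  proof -
    define r m where "r = Re c" and "m = Im c"
    have rm: "r\<^sup>2 + m\<^sup>2 = 1" using c(1) by (simp add: r_def m_def cmod_power2[symmetric])
    have r1: "1 + r \<noteq> 0"
    proof
      assume "1 + r = 0"
      then have "r = -1" by simp
      with rm have "m = 0" by (simp add: power2_eq_square)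
      with \<open>1 + r = 0\<close> c(2) show False by (simp add: r_def m_def complex_eq_iff)
    qed
    define t where "t = m / (1 + r)"
    define h where "h = (\<lambda>p::real \<times> real. g (Complex (fst p) (snd p)))"
    have [measurable]: "h \<in> borel_measurable (lborel \<Otimes>\<^sub>M lborel)" unfolding h_def by measurable
    have c_eq: "c = Complex r m" by (simp add: r_def m_def)
    have "(\<integral>\<^sup>+z. g (c * z) \<partial>lborel) = (\<integral>\<^sup>+p. g (c * Complex (fst p) (snd p)) \<partial>(lborel \<Otimes>\<^sub>M lborel))"
      by (rule nn_integral_lborel_complex_eq_pair) measurable
    also have "\<dots> = (\<integral>\<^sup>+p. (\<lambda>q. h (fst q - t * (snd q + m * fst q), snd q + m * fst q))
                        (fst p + (- t) * snd p, snd p) \<partial>(lborel \<Otimes>\<^sub>M lborel))"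
      unfolding c_eq rotation_eq_three_shears[OF rm r1 t_def] h_def by (simp add: algebra_simps)
    also have "\<dots> = (\<integral>\<^sup>+p. (\<lambda>q. h (fst q + (- t) * snd q, snd q)) (fst p, snd p + m * fst p)
                        \<partial>(lborel \<Otimes>\<^sub>M lborel))"
      by (subst nn_integral_lborel_pair_shear_fst) simp_all
    also have "\<dots> = (\<integral>\<^sup>+p. h (fst p + (- t) * snd p, snd p) \<partial>(lborel \<Otimes>\<^sub>M lborel))"
      by (rule nn_integral_lborel_pair_shear_snd) measurable
    also have "\<dots> = (\<integral>\<^sup>+p. h p \<partial>(lborel \<Otimes>\<^sub>M lborel))"
      by (rule nn_integral_lborel_pair_shear_fst) measurable
    also have "\<dots> = (\<integral>\<^sup>+z. g z \<partial>lborel)"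
      unfolding h_def by (rule nn_integral_lborel_complex_eq_pair[symmetric]) measurable
    finally show ?thesis .
  qed
  have i: "cmod \<i> = 1" "\<i> \<noteq> -1" by (auto simp: complex_eq_iff)
  show ?thesis
  proof (cases "c = -1")
    case False
    then show ?thesis using rotate[OF c False f] by simp
  next
    case True
    \<comment> \<open>the half-turn is two quarter-turns\<close>
    have "(\<integral>\<^sup>+z. f (\<i> * (\<i> * z)) \<partial>lborel) = (\<integral>\<^sup>+z. f (\<i> * z) \<partial>lborel)"
      by (rule rotate[OF i, of "\<lambda>z. f (\<i> * z)"]) measurable
    also have "\<dots> = (\<integral>\<^sup>+z. f z \<partial>lborel)" by (rule rotate[OF i f])
    finally show ?thesis using True by simp
  qed
qed

lemma nn_integral_lborel_translate:
  fixes f :: "'a::euclidean_space \<Rightarrow> ennreal"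
  assumes [measurable]: "f \<in> borel_measurable borel"
  shows "(\<integral>\<^sup>+y. f (y - x) \<partial>lborel) = (\<integral>\<^sup>+z. f z \<partial>lborel)"
proof -
  have "(\<integral>\<^sup>+z. f z \<partial>lborel) = (\<integral>\<^sup>+z. f z \<partial>distr lborel borel ((+) (- x)))"
    by (simp add: lborel_distr_plus)
  also have "\<dots> = (\<integral>\<^sup>+y. f (y - x) \<partial>lborel)"
    by (subst nn_integral_distr) simp_all
  finally show ?thesis ..
qed

lemma emeasure_lborel_ball_complex:
  "r \<ge> 0 \<Longrightarrow> emeasure lborel (ball (c::complex) r) = ennreal (pi * r\<^sup>2)"
  using unit_ball_vol_numeral(1)[of Num.One] by (subst emeasure_ball) auto

lemma emeasure_lborel_cball_complex:
  "r \<ge> 0 \<Longrightarrow> emeasure lborel (cball (c::complex) r) = ennreal (pi * r\<^sup>2)"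
  using unit_ball_vol_numeral(1)[of Num.One] by (subst emeasure_cball) auto

text \<open>The law of \<open>- cmod z\<close> rather than \<open>cmod z\<close>: \<open>measure_eqI_lessThan\<close> tests the sets
  \<open>{x<..}\<close>, whose preimages under \<open>- cmod\<close> are balls.\<close>

lemma distr_lborel_complex_neg_norm:
  "distr (lborel :: complex measure) borel (\<lambda>z. - cmod z) =
     density lborel (\<lambda>u. ennreal (2 * pi * max 0 (- u)))"
proof (rule measure_eqI_lessThan)
  have ball: "emeasure (distr (lborel :: complex measure) borel (\<lambda>z. - cmod z)) {x<..} =
      ennreal (pi * (max 0 (- x))\<^sup>2)" for x
  proof -
    have "(\<lambda>z::complex. - cmod z) -` {x<..} = ball 0 (max 0 (- x))"
      by (auto simp: max_def) (smt (verit) norm_ge_zero)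
    then show ?thesis by (simp add: emeasure_distr emeasure_lborel_ball_complex)
  qed
  then show "emeasure (distr (lborel :: complex measure) borel (\<lambda>z. - cmod z)) {x<..} < \<infinity>" for x
    by simp
  have density: "emeasure (density lborel (\<lambda>u. ennreal (2 * pi * max 0 (- u)))) {x<..} =
      ennreal (pi * (max 0 (- x))\<^sup>2)" for x
  proof (cases "x < 0")
    case False
    have "emeasure (density lborel (\<lambda>u. ennreal (2 * pi * max 0 (- u)))) {x<..} =
        (\<integral>\<^sup>+u. ennreal (2 * pi * max 0 (- u)) * indicator {x<..} u \<partial>lborel)"
      by (subst emeasure_density) auto
    also have "\<dots> = (\<integral>\<^sup>+u. 0 \<partial>(lborel :: real measure))"
      using False by (intro nn_integral_cong) (auto simp: indicator_def max_def)
    finally show ?thesis using False by (simp add: max_def)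
  next
    case True
    have "((\<lambda>u. - 2 * pi * u) has_integral (- pi * 0\<^sup>2) - (- pi * x\<^sup>2)) {x..0}"
      using True by (intro fundamental_theorem_of_calculus)
        (auto intro!: derivative_eq_intros simp: has_real_derivative_iff_has_vector_derivative[symmetric])
    then have integral: "(\<integral>\<^sup>+u. ennreal (indicator {x..0} u * (- 2 * pi * u)) \<partial>lborel) = ennreal (pi * x\<^sup>2)"
      by (intro nn_integral_has_integral_lebesgue) (auto simp: mult_nonpos_nonneg)
    have "emeasure (density lborel (\<lambda>u. ennreal (2 * pi * max 0 (- u)))) {x<..} =
        (\<integral>\<^sup>+u. ennreal (2 * pi * max 0 (- u)) * indicator {x<..} u \<partial>lborel)"
      by (subst emeasure_density) auto
    also have "\<dots> = (\<integral>\<^sup>+u. ennreal (indicator {x..0} u * (- 2 * pi * u)) \<partial>lborel)"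
    proof (rule nn_integral_cong_AE)
      show "AE u in lborel. ennreal (2 * pi * max 0 (- u)) * indicator {x<..} u =
          ennreal (indicator {x..0} u * (- 2 * pi * u))"
        using AE_lborel_singleton[of x] by eventually_elim (auto simp: indicator_def max_def)
    qed
    finally show ?thesis using True integral by (simp add: max_def)
  qed
  show "emeasure (distr lborel borel (\<lambda>z. - cmod z)) {x<..} =
      emeasure (density lborel (\<lambda>u. ennreal (2 * pi * max 0 (- u)))) {x<..}" for x
    unfolding ball density ..
qed simp_all

lemma nn_integral_lborel_complex_radial:
  fixes \<phi> :: "real \<Rightarrow> ennreal"
  assumes [measurable]: "\<phi> \<in> borel_measurable borel"
  shows "(\<integral>\<^sup>+z. \<phi> (cmod z) \<partial>(lborel :: complex measure)) =
           (\<integral>\<^sup>+s. ennreal (2 * pi * max 0 s) * \<phi> s \<partial>lborel)"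
proof -
  have "(\<integral>\<^sup>+z. \<phi> (cmod z) \<partial>(lborel :: complex measure)) =
      (\<integral>\<^sup>+u. \<phi> (- u) \<partial>distr (lborel :: complex measure) borel (\<lambda>z. - cmod z))"
    by (subst nn_integral_distr) auto
  also have "\<dots> = (\<integral>\<^sup>+u. ennreal (2 * pi * max 0 (- u)) * \<phi> (- u) \<partial>lborel)"
    unfolding distr_lborel_complex_neg_norm by (subst nn_integral_density) auto
  also have "\<dots> = (\<integral>\<^sup>+s. ennreal (2 * pi * max 0 s) * \<phi> s \<partial>lborel)"
    using nn_integral_real_affine[of "\<lambda>s. ennreal (2 * pi * max 0 s) * \<phi> s" "-1" 0] by simp
  finally show ?thesis .
qed

lemma integral_lborel_complex_radial:
  fixes f :: "real \<Rightarrow> real"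
  assumes [measurable]: "f \<in> borel_measurable borel"
  shows "(\<integral>z. f (cmod z) \<partial>(lborel :: complex measure)) = (\<integral>s. (2 * pi * max 0 s) * f s \<partial>lborel)"
proof -
  have "(\<integral>z. f (cmod z) \<partial>(lborel :: complex measure)) =
      (\<integral>u. f (- u) \<partial>distr (lborel :: complex measure) borel (\<lambda>z. - cmod z))"
    by (subst integral_distr) auto
  also have "\<dots> = (\<integral>u. (2 * pi * max 0 (- u)) * f (- u) \<partial>lborel)"
    unfolding distr_lborel_complex_neg_norm by (subst integral_density) auto
  also have "\<dots> = (\<integral>s. (2 * pi * max 0 s) * f s \<partial>lborel)"
    using lborel_integral_real_affine[of "-1" "\<lambda>s. (2 * pi * max 0 s) * f s" 0] by simp
  finally show ?thesis .
qed

section \<open>The uniform measure on the disc\<close>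

lemma cball_in_borel [measurable]: "cball (c::'a::euclidean_space) r \<in> sets borel"
  by (simp add: borel_closed)

lemma sets_unif_disc [simp, measurable_cong]: "sets (unif_disc R) = sets borel"
  by (simp add: unif_disc_def)

lemma space_unif_disc [simp]: "space (unif_disc R) = UNIV"
  by (simp add: unif_disc_def)

lemma finite_measure_unif_disc: "R > 0 \<Longrightarrow> finite_measure (unif_disc R)"
  unfolding unif_disc_def
  by (intro finite_measureI) (simp add: emeasure_lborel_cball_complex)

lemma nn_integral_unif_disc:
  fixes f :: "complex \<Rightarrow> ennreal"
  assumes "R > 0" and [measurable]: "f \<in> borel_measurable borel"
  shows "(\<integral>\<^sup>+z. f z \<partial>unif_disc R) = (\<integral>\<^sup>+z. f z * indicator (cball 0 R) z \<partial>lborel) / ennreal (pi * R\<^sup>2)"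
  unfolding unif_disc_def
  using assms by (subst nn_integral_uniform_measure) (auto simp: emeasure_lborel_cball_complex)

lemma integral_unif_disc:
  fixes f :: "complex \<Rightarrow> real"
  assumes R: "R > 0" and [measurable]: "f \<in> borel_measurable borel"
  shows "(\<integral>z. f z \<partial>unif_disc R) = (\<integral>z. indicator (cball 0 R) z * f z \<partial>lborel) / (pi * R\<^sup>2)"
proof -
  have "unif_disc R = density lborel (\<lambda>z. ennreal (indicator (cball 0 R) z / (pi * R\<^sup>2)))"
    unfolding unif_disc_def uniform_measure_def emeasure_lborel_cball_complex[OF less_imp_le[OF R]]
    using R divide_ennreal[of 1 "pi * R\<^sup>2"] by (intro density_cong) (auto simp: indicator_def)
  then have "(\<integral>z. f z \<partial>unif_disc R) = (\<integral>z. (1 / (pi * R\<^sup>2)) * (indicator (cball 0 R) z * f z) \<partial>lborel)"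
    by (simp add: integral_density field_simps)
  then show ?thesis by simp
qed

lemma distr_unif_disc_mult_unimodular:
  assumes c: "cmod c = 1"
  shows "distr (unif_disc R) (unif_disc R) (\<lambda>z. c * z) = unif_disc R"
proof (rule measure_eqI)
  fix A assume "A \<in> sets (distr (unif_disc R) (unif_disc R) (\<lambda>z. c * z))"
  then have [measurable]: "A \<in> sets borel" by simp
  have "(\<lambda>z. c * z) -` A \<inter> cball 0 R = (\<lambda>z. c * z) -` (A \<inter> cball 0 R)"
    using c by (auto simp: norm_mult)
  moreover have "(\<lambda>z. c * z) -` (A \<inter> cball 0 R) \<in> sets lborel"
    using measurable_sets[of "\<lambda>z. c * z" lborel borel "A \<inter> cball 0 R"] by simp
  moreover have "indicator ((\<lambda>z. c * z) -` (A \<inter> cball 0 R)) =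
      (\<lambda>z. indicator (A \<inter> cball 0 R) (c * z) :: ennreal)"
    by (auto simp: indicator_def)
  ultimately have "emeasure lborel ((\<lambda>z. c * z) -` A \<inter> cball 0 R) =
      (\<integral>\<^sup>+z. indicator (A \<inter> cball 0 R) (c * z) \<partial>lborel)"
    using nn_integral_indicator[of "(\<lambda>z. c * z) -` (A \<inter> cball 0 R)" lborel] by simp
  also have "\<dots> = emeasure lborel (A \<inter> cball 0 R)"
    by (subst nn_integral_lborel_complex_mult_unimodular[OF c]) simp_all
  finally have rotated: "emeasure lborel ((\<lambda>z. c * z) -` A \<inter> cball 0 R) = emeasure lborel (A \<inter> cball 0 R)" .
  have "(\<lambda>z. c * z) \<in> measurable (unif_disc R) (unif_disc R)"
    by (simp add: measurable_cong_sets[OF sets_unif_disc sets_unif_disc])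
  then have "emeasure (distr (unif_disc R) (unif_disc R) (\<lambda>z. c * z)) A =
      emeasure (unif_disc R) ((\<lambda>z. c * z) -` A)"
    by (subst emeasure_distr) simp_all
  also have "\<dots> = emeasure (unif_disc R) A"
    using rotated measurable_sets[of "\<lambda>z. c * z" lborel borel A]
    unfolding unif_disc_def by (simp add: Int_commute)
  finally show "emeasure (distr (unif_disc R) (unif_disc R) (\<lambda>z. c * z)) A = emeasure (unif_disc R) A" .
qed simp

lemma nn_integral_unif_disc_mult_unimodular:
  assumes "cmod c = 1" and [measurable]: "f \<in> borel_measurable borel"
  shows "(\<integral>\<^sup>+y. f (c * y) \<partial>unif_disc R) = (\<integral>\<^sup>+y. f y \<partial>unif_disc R)"
proof -
  have "(\<integral>\<^sup>+y. f y \<partial>unif_disc R) = (\<integral>\<^sup>+y. f y \<partial>distr (unif_disc R) (unif_disc R) (\<lambda>y. c * y))"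
    by (simp add: distr_unif_disc_mult_unimodular[OF assms(1)])
  also have "\<dots> = (\<integral>\<^sup>+y. f (c * y) \<partial>unif_disc R)"
    by (subst nn_integral_distr) (auto simp: measurable_cong_sets[OF sets_unif_disc sets_unif_disc])
  finally show ?thesis ..
qed

lemma integral_unif_disc_mult_unimodular:
  fixes f :: "complex \<Rightarrow> real"
  assumes "cmod c = 1" and [measurable]: "f \<in> borel_measurable borel"
  shows "(\<integral>y. f (c * y) \<partial>unif_disc R) = (\<integral>y. f y \<partial>unif_disc R)"
proof -
  have "(\<integral>y. f y \<partial>unif_disc R) = (\<integral>y. f y \<partial>distr (unif_disc R) (unif_disc R) (\<lambda>y. c * y))"
    by (simp add: distr_unif_disc_mult_unimodular[OF assms(1)])
  also have "\<dots> = (\<integral>y. f (c * y) \<partial>unif_disc R)"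
    by (subst integral_distr) (auto simp: measurable_cong_sets[OF sets_unif_disc sets_unif_disc])
  finally show ?thesis ..
qed

lemma AE_unif_disc_norm_neq: "AE y in unif_disc R. cmod y \<noteq> a"
  unfolding unif_disc_def
proof (rule AE_uniform_measureI)
  have "sphere (0::complex) a \<in> null_sets lborel"
    using negligible_sphere[of 0 a]
    by (auto simp: null_sets_completion_iff negligible_iff_null_sets negligible_convex_frontier)
  then have "AE y in lborel. y \<notin> sphere (0::complex) a" by (rule AE_not_in)
  then show "AE y in lborel. y \<in> cball 0 R \<longrightarrow> cmod y \<noteq> a" by eventually_elim auto
qed simp

section \<open>The logarithmic potential of the disc\<close>

lemma abs_ln_le: "(t::real) \<ge> 0 \<Longrightarrow> \<bar>ln t\<bar> \<le> t + 1 / t"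
proof (cases "t = 0")
  case False
  assume "t \<ge> 0"
  with False have t: "t > 0" by simp
  have "ln t \<le> t" using ln_le_minus_one[OF t] by simp
  moreover have "- ln t \<le> 1 / t" using ln_le_minus_one[of "1 / t"] t by (simp add: ln_div)
  moreover have "0 < 1 / t" using t by simp
  ultimately show ?thesis unfolding abs_le_iff using t by linarith
qed simp

lemma nn_integral_inverse_norm_cball_finite:
  "(\<integral>\<^sup>+z. ennreal (1 / cmod z) * indicator (cball 0 r) z \<partial>(lborel :: complex measure)) < \<infinity>"
proof -
  have "(\<integral>\<^sup>+z. ennreal (1 / cmod z) * indicator (cball 0 r) z \<partial>(lborel :: complex measure)) =
      (\<integral>\<^sup>+z. (\<lambda>s. ennreal (1 / s) * indicator {..r} s) (cmod z) \<partial>lborel)"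
    by (simp add: indicator_def)
  also have "\<dots> = (\<integral>\<^sup>+s. ennreal (2 * pi * max 0 s) * (ennreal (1 / s) * indicator {..r} s) \<partial>lborel)"
    by (rule nn_integral_lborel_complex_radial) measurable
  also have "\<dots> \<le> (\<integral>\<^sup>+s. ennreal (2 * pi) * indicator {0..r} s \<partial>lborel)"
    by (intro nn_integral_mono) (auto simp: indicator_def max_def ennreal_mult[symmetric])
  also have "\<dots> < \<infinity>"
    by (simp add: nn_integral_cmult_indicator ennreal_mult_less_top emeasure_lborel_Icc_eq)
  finally show ?thesis .
qed

lemma integrable_unif_disc_ln_norm_diff:
  assumes R: "R > 0"
  shows "integrable (unif_disc R) (\<lambda>y. ln (cmod (x - y)))"
proof (subst integrable_iff_bounded, intro conjI)
  show "(\<lambda>y. ln (cmod (x - y))) \<in> borel_measurable (unif_disc R)" by simp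
  define r where "r = cmod x + R"
  have "r \<ge> 0" using R by (simp add: r_def)
  define g where "g = (\<lambda>z::complex. ennreal r * indicator (cball 0 r) z + ennreal (1 / cmod z) * indicator (cball 0 r) z)"
  have [measurable]: "g \<in> borel_measurable borel" unfolding g_def by measurable
  have bound: "ennreal (norm (ln (cmod (x - y)))) * indicator (cball 0 R) y \<le> g (y - x)" for y
  proof (cases "y \<in> cball 0 R")
    case True
    then have d: "cmod (y - x) \<le> r" using norm_triangle_ineq4[of y x] by (simp add: r_def)
    have "\<bar>ln (cmod (x - y))\<bar> \<le> cmod (x - y) + 1 / cmod (x - y)" by (rule abs_ln_le) simp
    also have "\<dots> \<le> r + 1 / cmod (y - x)" using d by (simp add: norm_minus_commute)
    finally have "ennreal (norm (ln (cmod (x - y)))) \<le> ennreal (r + 1 / cmod (y - x))"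
      by (intro ennreal_leI) simp
    also have "\<dots> = ennreal r + ennreal (1 / cmod (y - x))" using \<open>r \<ge> 0\<close> by simp
    finally show ?thesis using True d by (simp add: g_def)
  qed simp
  have "(\<integral>\<^sup>+y. ennreal (norm (ln (cmod (x - y)))) * indicator (cball 0 R) y \<partial>lborel) \<le>
      (\<integral>\<^sup>+y. g (y - x) \<partial>lborel)"
    by (intro nn_integral_mono bound)
  also have "\<dots> = (\<integral>\<^sup>+z. g z \<partial>lborel)" by (rule nn_integral_lborel_translate) simp
  also have "\<dots> = ennreal r * emeasure lborel (cball (0::complex) r) +
      (\<integral>\<^sup>+z. ennreal (1 / cmod z) * indicator (cball 0 r) z \<partial>(lborel :: complex measure))"
    unfolding g_def by (subst nn_integral_add) (simp_all add: nn_integral_cmult_indicator)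
  also have "\<dots> < \<infinity>"
    using nn_integral_inverse_norm_cball_finite[of r] R
    by (simp add: r_def emeasure_lborel_cball_complex ennreal_mult_less_top)
  finally have finite: "(\<integral>\<^sup>+y. ennreal (norm (ln (cmod (x - y)))) * indicator (cball 0 R) y \<partial>lborel) < \<infinity>" .
  have "X / ennreal c < \<infinity>" if "X < \<infinity>" "c > 0" for X :: ennreal and c :: real
    using that by (simp add: ennreal_divide_eq_top_iff top.not_eq_extremum[symmetric])
  from this[OF finite] R show "(\<integral>\<^sup>+y. ennreal (norm (ln (cmod (x - y)))) \<partial>unif_disc R) < \<infinity>"
    by (subst nn_integral_unif_disc) simp_all
qed

lemma integral_lborel_circle_mean_ln_norm_diff:
  fixes x y :: complex
  assumes "cmod y \<noteq> cmod x"
  shows "(\<integral>t. indicator {0..1} t * ln (cmod (x - exp (2 * of_real pi * \<i> * of_real t) * y)) \<partial>lborel) =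
           ln (max (cmod x) (cmod y))"
proof -
  let ?f = "\<lambda>t::real. ln (cmod (x - exp (2 * of_real pi * \<i> * of_real t) * y))"
  have "cmod (x - exp (2 * of_real pi * \<i> * of_real t) * y) \<noteq> 0" for t
    using assms by (auto simp: norm_mult)
  then have "continuous_on {0..1} ?f" by (intro continuous_intros) auto
  then have "set_integrable lborel {0..1} ?f"
    unfolding set_integrable_def by (rule borel_integrable_compact[OF compact_Icc])
  then have "(\<integral>t. indicator {0..1} t * ?f t \<partial>lborel) = integral {0..1} ?f"
    by (subst set_borel_integral_eq_integral(2)[symmetric]) (simp_all add: set_lebesgue_integral_def)
  also have "\<dots> = ln (max (cmod x) (cmod y))"
    using assms by (intro integral_unique circle_mean_ln_norm_diff)
  finally show ?thesis .
qed

text \<open>Fubini over the rotations \<open>y \<mapsto> e\<^sup>2\<^sup>\<pi>\<^sup>i\<^sup>t y\<close>, which preserve \<open>unif_disc R\<close>, replaces the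
  integrand by its circle mean.\<close>

lemma integral_unif_disc_ln_norm_diff:
  assumes R: "R > 0"
  shows "(\<integral>y. ln (cmod (x - y)) \<partial>unif_disc R) = (\<integral>y. ln (max (cmod x) (cmod y)) \<partial>unif_disc R)"
proof -
  let ?e = "\<lambda>t::real. exp (2 * of_real pi * \<i> * of_real t)"
  define F where "F = (\<lambda>y t. indicator {0..1} t * ln (cmod (x - ?e t * y)))"
  interpret rho: finite_measure "unif_disc R" by (rule finite_measure_unif_disc[OF R])
  interpret pair_sigma_finite "unif_disc R" lborel ..
  have [measurable]: "case_prod F \<in> borel_measurable (unif_disc R \<Otimes>\<^sub>M lborel)"
    unfolding F_def by measurable
  define L where "L = (\<integral>y. ln (cmod (x - y)) \<partial>unif_disc R)"
  define K where "K = (\<integral>\<^sup>+y. ennreal (norm (ln (cmod (x - y)))) \<partial>unif_disc R)"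
  have K: "K < \<infinity>"
    using integrable_unif_disc_ln_norm_diff[OF R, of x] unfolding K_def integrable_iff_bounded by simp
  have "(\<integral>\<^sup>+p. ennreal (norm (case_prod F p)) \<partial>(unif_disc R \<Otimes>\<^sub>M lborel)) =
      (\<integral>\<^sup>+t. indicator {0..1} t * (\<integral>\<^sup>+y. ennreal (norm (ln (cmod (x - ?e t * y)))) \<partial>unif_disc R) \<partial>lborel)"
    unfolding F_def
    by (subst nn_integral_snd[symmetric])
       (auto intro!: nn_integral_cong simp: abs_mult indicator_def)
  also have "\<dots> = (\<integral>\<^sup>+t. K * indicator {0..1::real} t \<partial>lborel)"
  proof -
    have "(\<integral>\<^sup>+y. ennreal (norm (ln (cmod (x - ?e t * y)))) \<partial>unif_disc R) = K" for t
      unfolding K_def by (rule nn_integral_unif_disc_mult_unimodular) simp_all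
    then show ?thesis by (simp add: mult.commute)
  qed
  also have "\<dots> = K" by (simp add: nn_integral_cmult_indicator)
  finally have "integrable (unif_disc R \<Otimes>\<^sub>M lborel) (case_prod F)"
    using K by (simp add: integrable_iff_bounded)
  then have "(\<integral>t. (\<integral>y. F y t \<partial>unif_disc R) \<partial>lborel) = (\<integral>y. (\<integral>t. F y t \<partial>lborel) \<partial>unif_disc R)"
    by (rule Fubini_integral)
  moreover have "(\<integral>y. F y t \<partial>unif_disc R) = indicator {0..1} t * L" for t
  proof -
    have "(\<integral>y. ln (cmod (x - ?e t * y)) \<partial>unif_disc R) = L"
      unfolding L_def by (rule integral_unif_disc_mult_unimodular) simp_all
    then show ?thesis unfolding F_def by simp
  qed
  moreover have "AE y in unif_disc R. (\<integral>t. F y t \<partial>lborel) = ln (max (cmod x) (cmod y))"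
    using AE_unif_disc_norm_neq[where R = R and a = "cmod x"]
    by eventually_elim (simp add: F_def integral_lborel_circle_mean_ln_norm_diff)
  then have "(\<integral>y. (\<integral>t. F y t \<partial>lborel) \<partial>unif_disc R) = (\<integral>y. ln (max (cmod x) (cmod y)) \<partial>unif_disc R)"
    by (intro integral_cong_AE) simp_all
  ultimately show ?thesis by (simp add: L_def)
qed

lemma continuous_on_mult_ln: "continuous_on {0..} (\<lambda>s::real. s * ln s)"
  unfolding continuous_on_eq_continuous_within
proof
  fix s :: real
  assume "s \<in> {0..}"
  show "continuous (at s within {0..}) (\<lambda>s. s * ln s)"
  proof (cases "s = 0")
    case True
    have "((\<lambda>s::real. s * ln s) \<longlongrightarrow> 0) (at_right 0)" by real_asymp
    then show ?thesis using True by (simp add: continuous_within at_within_Ici_at_right)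
  next
    case False
    with \<open>s \<in> {0..}\<close> have "isCont (\<lambda>s. s * ln s) s" by (auto intro!: continuous_intros)
    then show ?thesis by (rule continuous_at_imp_continuous_at_within)
  qed
qed

lemma has_integral_mult_ln:
  fixes a b :: real
  assumes "0 \<le> a" "a \<le> b"
  shows "((\<lambda>s. 2 * pi * s * ln s) has_integral
           pi * (b\<^sup>2 * ln b - b\<^sup>2 / 2) - pi * (a\<^sup>2 * ln a - a\<^sup>2 / 2)) {a..b}"
proof -
  define F where "F = (\<lambda>s::real. pi * (s * (s * ln s) - s\<^sup>2 / 2))"
  have "continuous_on {0..} (\<lambda>s::real. s * (s * ln s))"
    by (intro continuous_on_mult continuous_on_id continuous_on_mult_ln)
  moreover have "continuous_on {0..} (\<lambda>s::real. s\<^sup>2 / 2)" by (intro continuous_intros) simp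
  ultimately have "continuous_on {0..} F"
    unfolding F_def by (intro continuous_on_mult_left continuous_on_diff)
  then have F_cont: "continuous_on {a..b} F"
    by (rule continuous_on_subset) (use assms in auto)
  have "(F has_real_derivative 2 * pi * s * ln s) (at s)" if "s > 0" for s
  proof -
    have "(F has_real_derivative pi * (s * (s * (1 / s) + ln s) + s * ln s - 2 * s / 2)) (at s)"
      unfolding F_def using that by (auto intro!: derivative_eq_intros)
    moreover have "pi * (s * (s * (1 / s) + ln s) + s * ln s - 2 * s / 2) = 2 * pi * s * ln s"
      using that by (simp add: field_simps)
    ultimately show ?thesis by (rule DERIV_cong)
  qed
  then have "((\<lambda>s. 2 * pi * s * ln s) has_integral (F b - F a)) {a..b}"
    using assms F_cont
    by (intro fundamental_theorem_of_calculus_interior)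
       (auto simp: has_real_derivative_iff_has_vector_derivative[symmetric])
  then show ?thesis by (simp add: F_def power2_eq_square mult.assoc)
qed

lemma has_integral_mult_ln_max:
  fixes a R :: real
  assumes R: "R > 0" and a: "a \<ge> 0"
  shows "((\<lambda>s. 2 * pi * s * ln (max a s)) has_integral
          (if a \<le> R then pi * (R\<^sup>2 * ln R - R\<^sup>2 / 2 + a\<^sup>2 / 2) else pi * R\<^sup>2 * ln a)) {0..R}"
proof -
  have const: "((\<lambda>s. 2 * pi * s * ln a) has_integral (pi * b\<^sup>2 * ln a)) {0..b}" if "b \<ge> 0" for b
  proof -
    have "((\<lambda>s. 2 * pi * s * ln a) has_integral (pi * ln a * b\<^sup>2) - (pi * ln a * 0\<^sup>2)) {0..b}"
      using that by (intro fundamental_theorem_of_calculus)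
        (auto intro!: derivative_eq_intros simp: has_real_derivative_iff_has_vector_derivative[symmetric])
    then show ?thesis by (simp add: algebra_simps)
  qed
  show ?thesis
  proof (cases "a < R")
    case False
    have "((\<lambda>s. 2 * pi * s * ln a) has_integral (pi * R\<^sup>2 * ln a)) {0..R}"
      using const[of R] R by simp
    moreover have "max a s = a" if "s \<in> {0..R}" for s
      using that False by simp
    ultimately have "((\<lambda>s. 2 * pi * s * ln (max a s)) has_integral (pi * R\<^sup>2 * ln a)) {0..R}"
      by (metis (no_types, lifting) has_integral_eq)
    then show ?thesis using False by (cases "a = R") (auto simp: mult.assoc)
  next
    case True
    have head: "((\<lambda>s. 2 * pi * s * ln (max a s)) has_integral (pi * a\<^sup>2 * ln a)) {0..a}"
      using const[OF a] by (rule has_integral_eq[rotated]) (auto simp: max_def)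
    have "((\<lambda>s. 2 * pi * s * ln s) has_integral
        pi * (R\<^sup>2 * ln R - R\<^sup>2 / 2) - pi * (a\<^sup>2 * ln a - a\<^sup>2 / 2)) {a..R}"
      using a True by (intro has_integral_mult_ln) auto
    then have tail: "((\<lambda>s. 2 * pi * s * ln (max a s)) has_integral
        pi * (R\<^sup>2 * ln R - R\<^sup>2 / 2) - pi * (a\<^sup>2 * ln a - a\<^sup>2 / 2)) {a..R}"
      by (rule has_integral_eq[rotated]) (auto simp: max_def)
    have "((\<lambda>s. 2 * pi * s * ln (max a s)) has_integral
        pi * a\<^sup>2 * ln a + (pi * (R\<^sup>2 * ln R - R\<^sup>2 / 2) - pi * (a\<^sup>2 * ln a - a\<^sup>2 / 2))) {0..R}"
      using a True by (intro has_integral_combine[OF _ _ head tail]) auto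
    then show ?thesis using True by (simp add: algebra_simps)
  qed
qed

lemma integral_unif_disc_ln_max_norm:
  fixes a R :: real
  assumes R: "R > 0" and a: "a \<ge> 0"
  shows "(\<integral>y. ln (max a (cmod y)) \<partial>unif_disc R) =
           (if a \<le> R then ln R - 1 / 2 + a\<^sup>2 / (2 * R\<^sup>2) else ln a)"
proof -
  define g where "g = (\<lambda>s::real. 2 * pi * s * ln (max a s))"
  have "continuous_on {0..R} g"
  proof (cases "a = 0")
    case True
    have "continuous_on {0..R} (\<lambda>s. 2 * pi * (s * ln s))"
      by (intro continuous_intros continuous_on_subset[OF continuous_on_mult_ln]) auto
    then show ?thesis by (rule continuous_on_eq) (auto simp: g_def True)
  next
    case False
    then have "max a s \<noteq> 0" for s using a by (simp add: max_def)
    then show ?thesis unfolding g_def by (intro continuous_intros) auto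
  qed
  then have g_int: "set_integrable lborel {0..R} g"
    unfolding set_integrable_def by (rule borel_integrable_compact[OF compact_Icc])
  have "(\<integral>y. ln (max a (cmod y)) \<partial>unif_disc R) =
      (\<integral>z. indicator (cball 0 R) z * ln (max a (cmod z)) \<partial>lborel) / (pi * R\<^sup>2)"
    by (rule integral_unif_disc[OF R]) measurable
  also have "(\<integral>z. indicator (cball 0 R) z * ln (max a (cmod z)) \<partial>lborel) =
      (\<integral>z. (\<lambda>s. indicator {..R} s * ln (max a s)) (cmod z) \<partial>lborel)"
    by (simp add: indicator_def)
  also have "\<dots> = (\<integral>s. (2 * pi * max 0 s) * (indicator {..R} s * ln (max a s)) \<partial>lborel)"
    by (rule integral_lborel_complex_radial) measurable
  also have "\<dots> = (LINT s:{0..R}|lborel. g s)"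
    unfolding set_lebesgue_integral_def g_def
    by (intro Bochner_Integration.integral_cong) (auto simp: indicator_def max_def)
  also have "\<dots> = integral {0..R} g" by (rule set_borel_integral_eq_integral(2)[OF g_int])
  also have "\<dots> = (if a \<le> R then pi * (R\<^sup>2 * ln R - R\<^sup>2 / 2 + a\<^sup>2 / 2) else pi * R\<^sup>2 * ln a)"
    unfolding g_def by (rule integral_unique[OF has_integral_mult_ln_max[OF R a]])
  finally have "(\<integral>y. ln (max a (cmod y)) \<partial>unif_disc R) =
      (if a \<le> R then pi * (R\<^sup>2 * ln R - R\<^sup>2 / 2 + a\<^sup>2 / 2) else pi * R\<^sup>2 * ln a) / (pi * R\<^sup>2)" .
  moreover have "pi * (R\<^sup>2 * ln R - R\<^sup>2 / 2 + a\<^sup>2 / 2) / (pi * R\<^sup>2) = ln R - 1 / 2 + a\<^sup>2 / (2 * R\<^sup>2)"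
    using R by (simp add: field_simps power2_eq_square)
  ultimately show ?thesis using R by simp
qed

lemma log_pot_eq:
  assumes "R > 0"
  shows "log_pot R x = - (if cmod x \<le> R then ln R - 1 / 2 + (cmod x)\<^sup>2 / (2 * R\<^sup>2) else ln (cmod x))"
  unfolding log_pot_def integral_unif_disc_ln_norm_diff[OF assms]
  by (simp add: integral_unif_disc_ln_max_norm[OF assms])

lemma ext_pot_eq:
  assumes "R > 0"
  shows "ext_pot n \<alpha> R x =
          (\<alpha> / (2 * real n)) * ((cmod x)\<^sup>2 / R\<^sup>2 - 1 + 2 * ln R) * indicator {x. cmod x \<le> R} x
        + (\<alpha> / real n) * ln (cmod x) * indicator {x. cmod x > R} x"
  using assms by (cases "n = 0") (simp_all add: ext_pot_def log_pot_eq indicator_def field_simps)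

section \<open>Bounds on the energy\<close>

lemma n_ext_pot_eq:
  assumes "n \<noteq> 0" "R > 0"
  shows "real n * ext_pot n \<alpha> R z =
           (if cmod z \<le> R then \<alpha> / 2 * ((cmod z)\<^sup>2 / R\<^sup>2 - 1 + 2 * ln R) else \<alpha> * ln (cmod z))"
  using assms by (simp add: ext_pot_eq indicator_def field_simps)

lemma borel_measurable_ext_pot [measurable]:
  assumes "R > 0"
  shows "ext_pot n \<alpha> R \<in> borel_measurable borel"
proof -
  have "ext_pot n \<alpha> R = (\<lambda>x. (\<alpha> / (2 * real n)) * ((cmod x)\<^sup>2 / R\<^sup>2 - 1 + 2 * ln R) * indicator {x. cmod x \<le> R} x
        + (\<alpha> / real n) * ln (cmod x) * indicator {x. cmod x > R} x)"
    using ext_pot_eq[OF assms] by blast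
  also have "\<dots> \<in> borel_measurable borel" by measurable
  finally show ?thesis .
qed

lemma n_ext_pot_le:
  assumes "n \<noteq> 0" "R > 0" "\<alpha> > 0" "cmod z \<le> B" "B \<ge> 1"
  shows "real n * ext_pot n \<alpha> R z \<le> \<alpha> * \<bar>ln R\<bar> + \<alpha> * ln B"
proof (cases "cmod z \<le> R")
  case True
  have "(cmod z)\<^sup>2 / R\<^sup>2 \<le> 1" using True assms by (simp add: divide_le_eq_1 power_mono)
  then have "\<alpha> / 2 * ((cmod z)\<^sup>2 / R\<^sup>2 - 1 + 2 * ln R) \<le> \<alpha> / 2 * (2 * ln R)"
    using assms by (intro mult_left_mono) auto
  also have "\<dots> \<le> \<alpha> * \<bar>ln R\<bar> + \<alpha> * ln B"
  proof -
    have "\<alpha> * ln R \<le> \<alpha> * \<bar>ln R\<bar>" using assms by (intro mult_left_mono) auto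
    moreover have "0 \<le> \<alpha> * ln B" using assms by simp
    ultimately show ?thesis by simp
  qed
  finally show ?thesis using True n_ext_pot_eq[OF assms(1,2)] by simp
next
  case False
  then have "ln (cmod z) \<le> ln B" using assms by (subst ln_le_cancel_iff) auto
  then have "\<alpha> * ln (cmod z) \<le> \<alpha> * ln B" using assms by simp
  moreover have "0 \<le> \<alpha> * \<bar>ln R\<bar>" using assms by simp
  ultimately show ?thesis using False n_ext_pot_eq[OF assms(1,2)] by simp
qed

lemma n_ext_pot_ge:
  assumes "n \<noteq> 0" "R > 0" "\<alpha> > 0" "cmod z \<le> R"
  shows "- (\<alpha> / 2) - \<alpha> * \<bar>ln R\<bar> \<le> real n * ext_pot n \<alpha> R z"
proof -
  have "0 \<le> (cmod z)\<^sup>2 / R\<^sup>2" by simp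
  then have "- 1 - 2 * \<bar>ln R\<bar> \<le> (cmod z)\<^sup>2 / R\<^sup>2 - 1 + 2 * ln R"
    using abs_ge_minus_self[of "ln R"] by linarith
  from mult_left_mono[OF this, of "\<alpha> / 2"] show ?thesis
    using assms n_ext_pot_eq[OF assms(1,2)] by (simp add: algebra_simps)
qed

lemma neg_beta_energy_eq:
  "- \<beta> * energy n \<alpha> R x =
     \<beta> * (\<Sum>j<n. \<Sum>i<j. ln (cmod (x i - x j))) - \<beta> * (\<Sum>i<n. real n * ext_pot n \<alpha> R (x i))"
  unfolding energy_def by (simp add: sum_negf sum_distrib_left algebra_simps)

lemma sum_pairs_add_eq:
  fixes L :: "nat \<Rightarrow> real"
  shows "(\<Sum>j<n. \<Sum>i<j. L i + L j) = (real n - 1) * (\<Sum>i<n. L i)"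
proof (induction n)
  case (Suc n)
  have "(\<Sum>i<n. L i + L n) = (\<Sum>i<n. L i) + real n * L n" by (simp add: sum.distrib)
  with Suc show ?case by (simp add: algebra_simps)
qed simp

lemma ln_norm_diff_le: "ln (cmod (a - b)) \<le> ln (1 + cmod a) + ln (1 + cmod b)"
proof (cases "a = b")
  case False
  have "cmod (a - b) \<le> cmod a + cmod b" by (rule norm_triangle_ineq4)
  also have "\<dots> \<le> (1 + cmod a) * (1 + cmod b)" by (simp add: algebra_simps)
  moreover have "0 < (1 + cmod a) * (1 + cmod b)" by (intro mult_pos_pos) (auto intro: add_pos_nonneg)
  ultimately have "ln (cmod (a - b)) \<le> ln ((1 + cmod a) * (1 + cmod b))"
    using False by (subst ln_le_cancel_iff) auto
  also have "\<dots> = ln (1 + cmod a) + ln (1 + cmod b)"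
    by (rule ln_mult_pos) (auto intro: add_pos_nonneg)
  finally show ?thesis .
qed simp

lemma sum_pairs_ln_norm_diff_le:
  fixes x :: "nat \<Rightarrow> complex"
  shows "(\<Sum>j<n. \<Sum>i<j. ln (cmod (x i - x j))) \<le> (real n - 1) * (\<Sum>i<n. ln (1 + cmod (x i)))"
proof -
  have "(\<Sum>j<n. \<Sum>i<j. ln (cmod (x i - x j))) \<le> (\<Sum>j<n. \<Sum>i<j. ln (1 + cmod (x i)) + ln (1 + cmod (x j)))"
    by (intro sum_mono ln_norm_diff_le)
  also have "\<dots> = (real n - 1) * (\<Sum>i<n. ln (1 + cmod (x i)))" by (rule sum_pairs_add_eq)
  finally show ?thesis .
qed

lemma sum_pairs_ln_norm_diff_ge:
  fixes x :: "nat \<Rightarrow> complex" and L :: real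
  assumes "n \<ge> 1"
      and nonneg: "\<And>i j. 1 \<le> i \<Longrightarrow> i < j \<Longrightarrow> j < n \<Longrightarrow> 0 \<le> ln (cmod (x i - x j))"
      and first: "\<And>j. 1 \<le> j \<Longrightarrow> j < n \<Longrightarrow> L \<le> ln (cmod (x 0 - x j))"
  shows "(real n - 1) * L \<le> (\<Sum>j<n. \<Sum>i<j. ln (cmod (x i - x j)))"
proof -
  have le: "(\<Sum>j<n. (if j = 0 then 0 else L)) \<le> (\<Sum>j<n. \<Sum>i<j. ln (cmod (x i - x j)))"
  proof (rule sum_mono)
    fix j assume j: "j \<in> {..<n}"
    show "(if j = 0 then 0 else L) \<le> (\<Sum>i<j. ln (cmod (x i - x j)))"
    proof (cases "j = 0")
      case False
      have "L \<le> ln (cmod (x 0 - x j))" using first[of j] False j by simp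
      also have "\<dots> \<le> (\<Sum>i<j. ln (cmod (x i - x j)))"
        by (rule member_le_sum[where f = "\<lambda>i. ln (cmod (x i - x j))"]) (use False j nonneg in auto)
      finally show ?thesis using False by simp
    qed simp
  qed
  have "(\<Sum>j<Suc m. (if j = 0 then 0 else L)) = real m * L" for m
    by (induction m) (auto simp: algebra_simps)
  moreover obtain m where "n = Suc m" using assms(1) by (cases n) auto
  ultimately show ?thesis using le by simp
qed

section \<open>Power tails in the plane\<close>

lemma nn_integral_inverse_atLeast_infinite:
  assumes c: "c > 0"
  shows "(\<integral>\<^sup>+s. ennreal (1 / s) * indicator {c..} s \<partial>lborel) = \<infinity>"
proof -
  let ?I = "\<integral>\<^sup>+s. ennreal (1 / s) * indicator {c..} s \<partial>lborel"
  have log_le: "ennreal (ln b - ln c) \<le> ?I" if "c \<le> b" for b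
  proof -
    have "((\<lambda>s. 1 / s) has_integral ln b - ln c) {c..b}"
      using that c by (intro fundamental_theorem_of_calculus)
        (auto intro!: derivative_eq_intros simp: has_real_derivative_iff_has_vector_derivative[symmetric])
    then have "(\<integral>\<^sup>+s. ennreal (indicator {c..b} s * (1 / s)) \<partial>lborel) = ennreal (ln b - ln c)"
      using c by (intro nn_integral_has_integral_lebesgue) auto
    moreover have "(\<integral>\<^sup>+s. ennreal (indicator {c..b} s * (1 / s)) \<partial>lborel) \<le> ?I"
      by (intro nn_integral_mono) (auto simp: indicator_def)
    ultimately show ?thesis by simp
  qed
  show ?thesis
  proof (rule ccontr)
    assume "?I \<noteq> \<infinity>"
    then obtain r where r: "?I = ennreal r" "r \<ge> 0" by (cases ?I rule: ennreal_cases) auto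
    have "ln (c * exp (r + 1)) - ln c = r + 1" using c by (simp add: ln_mult)
    with log_le[of "c * exp (r + 1)"] r c show False by simp
  qed
qed

lemma nn_integral_norm_powr_tail_eq:
  assumes M: "M > 0"
  shows "(\<integral>\<^sup>+z. ennreal (cmod z powr - p) * indicator {z. M \<le> cmod z} z \<partial>(lborel :: complex measure)) =
           ennreal (2 * pi) * (\<integral>\<^sup>+s. ennreal (indicator {M..} s * s powr (1 - p)) \<partial>lborel)"
proof -
  have "(\<integral>\<^sup>+z. ennreal (cmod z powr - p) * indicator {z. M \<le> cmod z} z \<partial>(lborel :: complex measure)) =
      (\<integral>\<^sup>+z. (\<lambda>s. ennreal (s powr - p) * indicator {M..} s) (cmod z) \<partial>lborel)"
    by (simp add: indicator_def)
  also have "\<dots> = (\<integral>\<^sup>+s. ennreal (2 * pi * max 0 s) * (ennreal (s powr - p) * indicator {M..} s) \<partial>lborel)"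
    by (rule nn_integral_lborel_complex_radial) measurable
  also have "\<dots> = (\<integral>\<^sup>+s. ennreal (2 * pi) * ennreal (indicator {M..} s * s powr (1 - p)) \<partial>lborel)"
    using M by (intro nn_integral_cong)
      (auto simp: indicator_def max_def ennreal_mult[symmetric] powr_diff powr_minus field_simps)
  also have "\<dots> = ennreal (2 * pi) * (\<integral>\<^sup>+s. ennreal (indicator {M..} s * s powr (1 - p)) \<partial>lborel)"
    by (rule nn_integral_cmult) measurable
  finally show ?thesis .
qed

lemma nn_integral_norm_powr_tail_finite_iff:
  assumes M: "M > 0"
  shows "(\<integral>\<^sup>+z. ennreal (cmod z powr - p) * indicator {z. M \<le> cmod z} z \<partial>(lborel :: complex measure)) < \<infinity>
           \<longleftrightarrow> p > 2"
  unfolding nn_integral_norm_powr_tail_eq[OF M]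
proof
  assume p: "p > 2"
  have "((\<lambda>s. s powr (1 - p)) has_integral - (M powr (1 - p + 1)) / (1 - p + 1)) {M..}"
    using p M by (intro has_integral_powr_to_inf) auto
  then have "(\<integral>\<^sup>+s. ennreal (indicator {M..} s * s powr (1 - p)) \<partial>lborel) =
      ennreal (- (M powr (1 - p + 1)) / (1 - p + 1))"
    by (intro nn_integral_has_integral_lebesgue) auto
  then show "ennreal (2 * pi) * (\<integral>\<^sup>+s. ennreal (indicator {M..} s * s powr (1 - p)) \<partial>lborel) < \<infinity>"
    by (simp add: ennreal_mult_less_top)
next
  assume finite: "ennreal (2 * pi) * (\<integral>\<^sup>+s. ennreal (indicator {M..} s * s powr (1 - p)) \<partial>lborel) < \<infinity>"
  show "p > 2"
  proof (rule ccontr)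
    assume "\<not> p > 2"
    \<comment> \<open>then \<open>s powr (1 - p) \<ge> M powr (2 - p) / s\<close> on \<open>{M..}\<close>, which is not integrable\<close>
    have "ennreal (M powr (2 - p)) * (ennreal (1 / s) * indicator {M..} s) \<le>
        ennreal (indicator {M..} s * s powr (1 - p))" for s
    proof (cases "M \<le> s")
      case True
      have "M powr (2 - p) \<le> s powr (2 - p)" using True M \<open>\<not> p > 2\<close> by (intro powr_mono2) auto
      then have "M powr (2 - p) * (1 / s) \<le> s powr (2 - p) * (1 / s)"
        using True M by (intro mult_right_mono) auto
      also have "s powr (2 - p) = s powr (1 - p) * s powr 1" by (subst powr_add[symmetric]) simp
      finally have le: "M powr (2 - p) * (1 / s) \<le> s powr (1 - p)" using True M by simp
      have "ennreal (M powr (2 - p)) * ennreal (1 / s) = ennreal (M powr (2 - p) * (1 / s))"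
        using True M by (intro ennreal_mult[symmetric]) auto
      also have "\<dots> \<le> ennreal (s powr (1 - p))" using le by (rule ennreal_leI)
      finally show ?thesis using True by simp
    qed simp
    then have "ennreal (M powr (2 - p)) * (\<integral>\<^sup>+s. ennreal (1 / s) * indicator {M..} s \<partial>lborel) \<le>
        (\<integral>\<^sup>+s. ennreal (indicator {M..} s * s powr (1 - p)) \<partial>lborel)"
      by (subst nn_integral_cmult[symmetric]) (auto intro!: nn_integral_mono)
    then have "(\<integral>\<^sup>+s. ennreal (indicator {M..} s * s powr (1 - p)) \<partial>lborel) = \<infinity>"
      using M by (simp add: nn_integral_inverse_atLeast_infinite top_unique)
    with finite show False by (simp add: ennreal_mult_eq_top_iff)
  qed
qed

section \<open>The partition function\<close>

definition particle_weight :: "nat \<Rightarrow> real \<Rightarrow> real \<Rightarrow> real \<Rightarrow> complex \<Rightarrow> real" where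
  "particle_weight n \<beta> \<alpha> R z = exp (\<beta> * (real n - 1) * ln (1 + cmod z) - \<beta> * (real n * ext_pot n \<alpha> R z))"

lemma borel_measurable_particle_weight [measurable]:
  "R > 0 \<Longrightarrow> particle_weight n \<beta> \<alpha> R \<in> borel_measurable borel"
  unfolding particle_weight_def by measurable

lemma exp_neg_beta_energy_le_prod:
  assumes "\<beta> \<ge> 0"
  shows "exp (- \<beta> * energy n \<alpha> R x) \<le> (\<Prod>i<n. particle_weight n \<beta> \<alpha> R (x i))"
proof -
  have "\<beta> * (\<Sum>j<n. \<Sum>i<j. ln (cmod (x i - x j))) \<le> \<beta> * ((real n - 1) * (\<Sum>i<n. ln (1 + cmod (x i))))"
    using assms by (intro mult_left_mono sum_pairs_ln_norm_diff_le)
  then have "- \<beta> * energy n \<alpha> R x \<le>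
      (\<Sum>i<n. \<beta> * (real n - 1) * ln (1 + cmod (x i)) - \<beta> * (real n * ext_pot n \<alpha> R (x i)))"
    unfolding neg_beta_energy_eq by (simp add: sum_subtractf sum_distrib_left mult.assoc)
  then show ?thesis by (simp add: particle_weight_def exp_sum[symmetric])
qed

lemma particle_weight_le_inside:
  assumes n: "n \<ge> 2" and \<alpha>: "\<alpha> > 0" and \<beta>: "\<beta> > 0" and R: "R > 0" and z: "cmod z \<le> R"
  shows "particle_weight n \<beta> \<alpha> R z \<le> exp (\<beta> * (real n - 1) * ln (1 + R) + \<beta> * (\<alpha> / 2 + \<alpha> * \<bar>ln R\<bar>))"
proof -
  have "ln (1 + cmod z) \<le> ln (1 + R)" using z R by (subst ln_le_cancel_iff) (auto intro: add_pos_nonneg)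
  then have "\<beta> * (real n - 1) * ln (1 + cmod z) \<le> \<beta> * (real n - 1) * ln (1 + R)"
    using \<beta> n by (intro mult_left_mono) auto
  moreover have "\<beta> * (- (\<alpha> / 2) - \<alpha> * \<bar>ln R\<bar>) \<le> \<beta> * (real n * ext_pot n \<alpha> R z)"
    using n \<alpha> \<beta> R z by (intro mult_left_mono n_ext_pot_ge) auto
  ultimately have "\<beta> * (real n - 1) * ln (1 + cmod z) - \<beta> * (real n * ext_pot n \<alpha> R z) \<le>
      \<beta> * (real n - 1) * ln (1 + R) + \<beta> * (\<alpha> / 2 + \<alpha> * \<bar>ln R\<bar>)"
    by (simp add: algebra_simps)
  then show ?thesis unfolding particle_weight_def by simp
qed

lemma particle_weight_le_outside:
  assumes n: "n \<ge> 2" and \<beta>: "\<beta> > 0" and R: "R > 0" and z: "R < cmod z"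
  shows "particle_weight n \<beta> \<alpha> R z \<le>
           exp (\<beta> * (real n - 1) * ln (1 + 1 / R)) * cmod z powr - (\<beta> * (\<alpha> - real n + 1))"
proof -
  have z0: "0 < cmod z" using z R by linarith
  have "1 + cmod z \<le> (1 + 1 / R) * cmod z" using z R by (simp add: field_simps)
  moreover have "0 < (1 + 1 / R) * cmod z" using z0 R by (intro mult_pos_pos) (auto intro: add_pos_pos)
  ultimately have "ln (1 + cmod z) \<le> ln ((1 + 1 / R) * cmod z)"
    by (subst ln_le_cancel_iff) (auto intro: add_pos_nonneg)
  also have "\<dots> = ln (1 + 1 / R) + ln (cmod z)" using z0 R by (intro ln_mult_pos) (auto intro: add_pos_nonneg)
  finally have "\<beta> * (real n - 1) * ln (1 + cmod z) \<le> \<beta> * (real n - 1) * (ln (1 + 1 / R) + ln (cmod z))"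
    using \<beta> n by (intro mult_left_mono) auto
  moreover have "real n * ext_pot n \<alpha> R z = \<alpha> * ln (cmod z)" using n_ext_pot_eq R z n by simp
  moreover have "\<beta> * (real n - 1) * (ln (1 + 1 / R) + ln (cmod z)) - \<beta> * (\<alpha> * ln (cmod z)) =
      \<beta> * (real n - 1) * ln (1 + 1 / R) + (- (\<beta> * (\<alpha> - real n + 1))) * ln (cmod z)"
    by (simp add: algebra_simps)
  ultimately have "particle_weight n \<beta> \<alpha> R z \<le>
      exp (\<beta> * (real n - 1) * ln (1 + 1 / R) + (- (\<beta> * (\<alpha> - real n + 1))) * ln (cmod z))"
    unfolding particle_weight_def by simp
  then show ?thesis using z0 by (simp add: powr_def mult_exp_exp)
qed

lemma nn_integral_particle_weight_finite:
  assumes n: "n \<ge> 2" and \<alpha>: "\<alpha> > 0" and \<beta>: "\<beta> > 0" and R: "R > 0"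
      and gt2: "\<beta> * (\<alpha> - real n + 1) > 2"
  shows "(\<integral>\<^sup>+z. ennreal (particle_weight n \<beta> \<alpha> R z) \<partial>lborel) < \<infinity>"
proof -
  define q where "q = \<beta> * (\<alpha> - real n + 1)"
  define c1 where "c1 = exp (\<beta> * (real n - 1) * ln (1 + R) + \<beta> * (\<alpha> / 2 + \<alpha> * \<bar>ln R\<bar>))"
  define c2 where "c2 = exp (\<beta> * (real n - 1) * ln (1 + 1 / R))"
  have bound: "ennreal (particle_weight n \<beta> \<alpha> R z) \<le>
      ennreal c1 * indicator (cball 0 R) z + ennreal c2 * (ennreal (cmod z powr - q) * indicator {z. R \<le> cmod z} z)"
    for z
  proof (cases "cmod z \<le> R")
    case True
    then have "ennreal (particle_weight n \<beta> \<alpha> R z) \<le> ennreal c1 * indicator (cball 0 R) z"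
      using particle_weight_le_inside[OF n \<alpha> \<beta> R True] by (simp add: c1_def ennreal_leI)
    then show ?thesis by (rule order_trans) simp
  next
    case False
    then have "particle_weight n \<beta> \<alpha> R z \<le> c2 * cmod z powr - q"
      unfolding c2_def q_def using n \<beta> R by (intro particle_weight_le_outside) auto
    then show ?thesis using False by (simp add: c2_def indicator_def ennreal_mult[symmetric] ennreal_leI)
  qed
  have "(\<integral>\<^sup>+z. ennreal (particle_weight n \<beta> \<alpha> R z) \<partial>lborel) \<le>
      (\<integral>\<^sup>+z. ennreal c1 * indicator (cball 0 R) z +
              ennreal c2 * (ennreal (cmod z powr - q) * indicator {z. R \<le> cmod z} z) \<partial>lborel)"
    by (intro nn_integral_mono bound)
  also have "\<dots> = ennreal c1 * emeasure lborel (cball (0::complex) R) +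
      ennreal c2 * (\<integral>\<^sup>+z. ennreal (cmod z powr - q) * indicator {z. R \<le> cmod z} z \<partial>(lborel :: complex measure))"
    by (subst nn_integral_add) (simp_all add: nn_integral_cmult)
  also have "\<dots> < \<infinity>"
    using nn_integral_norm_powr_tail_finite_iff[OF R, of q] gt2 R
    by (simp add: q_def emeasure_lborel_cball_complex ennreal_mult_less_top)
  finally show ?thesis .
qed

lemma partition_fn_finite:
  assumes "n \<ge> 2" "\<alpha> > 0" "\<beta> > 0" "R > 0" and "\<beta> * (\<alpha> - real n + 1) > 2"
  shows "partition_fn n \<beta> \<alpha> R < \<infinity>"
proof -
  interpret product_sigma_finite "\<lambda>_::nat. lborel :: complex measure" by standard
  have "partition_fn n \<beta> \<alpha> R \<le>
      (\<integral>\<^sup>+x. (\<Prod>i\<in>{..<n}. ennreal (particle_weight n \<beta> \<alpha> R (x i))) \<partial>PiM {..<n} (\<lambda>_. lborel))"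
    unfolding partition_fn_def
  proof (rule nn_integral_mono)
    fix x :: "nat \<Rightarrow> complex"
    have "ennreal (exp (- \<beta> * energy n \<alpha> R x)) \<le> ennreal (\<Prod>i<n. particle_weight n \<beta> \<alpha> R (x i))"
      using assms(3) by (intro ennreal_leI exp_neg_beta_energy_le_prod) simp
    then show "ennreal (exp (- \<beta> * energy n \<alpha> R x)) \<le> (\<Prod>i\<in>{..<n}. ennreal (particle_weight n \<beta> \<alpha> R (x i)))"
      by (simp add: prod_ennreal particle_weight_def)
  qed
  also have "\<dots> = (\<integral>\<^sup>+z. ennreal (particle_weight n \<beta> \<alpha> R z) \<partial>lborel) ^ n"
    using assms(4) by (subst product_nn_integral_prod) simp_all
  also have "\<dots> < \<infinity>"
    using nn_integral_particle_weight_finite[OF assms] by (simp add: power_less_top_ennreal)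
  finally show ?thesis .
qed

lemma norm_le_of_mem_ball_even:
  "x \<in> ball (of_real (2 * real i)) (1 / 2) \<Longrightarrow> i < n \<Longrightarrow> cmod x \<le> 2 * real n"
  using norm_triangle_ineq2[of x "of_real (2 * real i)"] by (auto simp: dist_norm norm_minus_commute)

lemma sum_pairs_ln_norm_diff_ge_one_far:
  fixes x :: "nat \<Rightarrow> complex"
  assumes n: "n \<ge> 2" and far: "4 * real n \<le> cmod (x 0)"
      and near: "\<And>i. i \<in> {1..<n} \<Longrightarrow> x i \<in> ball (of_real (2 * real i)) (1 / 2)"
  shows "(real n - 1) * (ln (cmod (x 0)) - ln 2) \<le> (\<Sum>j<n. \<Sum>i<j. ln (cmod (x i - x j)))"
proof -
  let ?c = "\<lambda>k. of_real (2 * real k) :: complex"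
  have x0: "0 < cmod (x 0)" using far n by linarith
  have near': "cmod (x i - ?c i) < 1 / 2" if "i \<in> {1..<n}" for i
    using near[OF that] by (simp add: dist_norm norm_minus_commute)
  have separated: "0 \<le> ln (cmod (x i - x j))" if "1 \<le> i" "i < j" "j < n" for i j
  proof -
    have "2 \<le> cmod (?c j - ?c i)"
      using that by (simp only: of_real_diff[symmetric] norm_of_real)
    also have "?c j - ?c i = (x i - ?c i) + (x j - x i) - (x j - ?c j)" by simp
    also have "cmod \<dots> \<le> cmod (x i - ?c i) + cmod (x j - x i) + cmod (x j - ?c j)"
      by (rule order_trans[OF norm_triangle_ineq4 add_right_mono[OF norm_triangle_ineq]])
    finally have "1 \<le> cmod (x i - x j)"
      using near'[of i] near'[of j] that by (simp add: norm_minus_commute)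
    then show ?thesis by simp
  qed
  have with_x0: "ln (cmod (x 0)) - ln 2 \<le> ln (cmod (x 0 - x j))" if "1 \<le> j" "j < n" for j
  proof -
    have "cmod (x j) \<le> 2 * real n" using near[of j] that by (intro norm_le_of_mem_ball_even) auto
    then have "cmod (x 0) / 2 \<le> cmod (x 0 - x j)"
      using norm_triangle_ineq2[of "x 0" "x j"] far by simp
    then have "ln (cmod (x 0) / 2) \<le> ln (cmod (x 0 - x j))" using x0 by (subst ln_le_cancel_iff) auto
    then show ?thesis using x0 by (simp add: ln_div)
  qed
  show ?thesis using n separated with_x0 by (intro sum_pairs_ln_norm_diff_ge) auto
qed

lemma sum_n_ext_pot_le_one_far:
  assumes n: "n \<ge> 2" and \<alpha>: "\<alpha> > 0" and R: "R > 0" and far: "R < cmod (x 0)"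
      and near: "\<And>i. i \<in> {1..<n} \<Longrightarrow> x i \<in> ball (of_real (2 * real i)) (1 / 2)"
  shows "(\<Sum>i<n. real n * ext_pot n \<alpha> R (x i)) \<le>
           \<alpha> * ln (cmod (x 0)) + (real n - 1) * (\<alpha> * \<bar>ln R\<bar> + \<alpha> * ln (2 * real n))"
proof -
  have n0: "n \<noteq> 0" using n by simp
  have "{..<n} = insert 0 {1..<n}" using n by auto
  then have "(\<Sum>i<n. real n * ext_pot n \<alpha> R (x i)) =
      real n * ext_pot n \<alpha> R (x 0) + (\<Sum>i\<in>{1..<n}. real n * ext_pot n \<alpha> R (x i))" by simp
  also have "real n * ext_pot n \<alpha> R (x 0) = \<alpha> * ln (cmod (x 0))"
    using n_ext_pot_eq[OF n0 R] far by simp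
  also have "(\<Sum>i\<in>{1..<n}. real n * ext_pot n \<alpha> R (x i)) \<le>
      (\<Sum>i\<in>{1..<n}. \<alpha> * \<bar>ln R\<bar> + \<alpha> * ln (2 * real n))"
    using n near by (intro sum_mono n_ext_pot_le[OF n0 R \<alpha>] norm_le_of_mem_ball_even) auto
  finally show ?thesis using n by (simp add: of_nat_diff)
qed

lemma exp_neg_beta_energy_ge_one_far:
  assumes n: "n \<ge> 2" and \<alpha>: "\<alpha> > 0" and \<beta>: "\<beta> > 0" and R: "R > 0"
      and far: "4 * real n + R + 1 \<le> cmod (x 0)"
      and near: "\<And>i. i \<in> {1..<n} \<Longrightarrow> x i \<in> ball (of_real (2 * real i)) (1 / 2)"
  shows "exp (- \<beta> * (real n - 1) * (ln 2 + \<alpha> * \<bar>ln R\<bar> + \<alpha> * ln (2 * real n))) *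
           cmod (x 0) powr - (\<beta> * (\<alpha> - real n + 1)) \<le> exp (- \<beta> * energy n \<alpha> R x)"
proof -
  define K0 where "K0 = \<alpha> * \<bar>ln R\<bar> + \<alpha> * ln (2 * real n)"
  have pairs: "(real n - 1) * (ln (cmod (x 0)) - ln 2) \<le> (\<Sum>j<n. \<Sum>i<j. ln (cmod (x i - x j)))"
    using n far R near by (intro sum_pairs_ln_norm_diff_ge_one_far) auto
  have pot: "(\<Sum>i<n. real n * ext_pot n \<alpha> R (x i)) \<le> \<alpha> * ln (cmod (x 0)) + (real n - 1) * K0"
    unfolding K0_def using n \<alpha> R far near by (intro sum_n_ext_pot_le_one_far) auto
  have "- \<beta> * (real n - 1) * (ln 2 + K0) - \<beta> * (\<alpha> - real n + 1) * ln (cmod (x 0)) =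
      \<beta> * ((real n - 1) * (ln (cmod (x 0)) - ln 2)) - \<beta> * (\<alpha> * ln (cmod (x 0)) + (real n - 1) * K0)"
    by (simp add: algebra_simps)
  also have "\<dots> \<le> - \<beta> * energy n \<alpha> R x"
    unfolding neg_beta_energy_eq using mult_left_mono[OF pairs, of \<beta>] mult_left_mono[OF pot, of \<beta>] \<beta>
    by linarith
  finally have "exp (- \<beta> * (real n - 1) * (ln 2 + K0) - \<beta> * (\<alpha> - real n + 1) * ln (cmod (x 0))) \<le>
      exp (- \<beta> * energy n \<alpha> R x)" by simp
  moreover have "x 0 \<noteq> 0" using far R by auto
  ultimately show ?thesis by (simp add: K0_def powr_def mult_exp_exp add.assoc)
qed

lemma partition_fn_infinite:
  assumes n: "n \<ge> 2" and \<alpha>: "\<alpha> > 0" and \<beta>: "\<beta> > 0" and R: "R > 0"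
      and le2: "\<beta> * (\<alpha> - real n + 1) \<le> 2"
  shows "partition_fn n \<beta> \<alpha> R = \<infinity>"
proof -
  interpret product_sigma_finite "\<lambda>_::nat. lborel :: complex measure" by standard
  define q where "q = \<beta> * (\<alpha> - real n + 1)"
  define M where "M = 4 * real n + R + 1"
  define K where "K = exp (- \<beta> * (real n - 1) * (ln 2 + \<alpha> * \<bar>ln R\<bar> + \<alpha> * ln (2 * real n)))"
  define G where "G = (\<lambda>i z. if i = 0 then ennreal K * (ennreal (cmod z powr - q) * indicator {z. M \<le> cmod z} z)
                              else indicator (ball (of_real (2 * real i)) (1 / 2)) z :: ennreal)"
  have [measurable]: "G i \<in> borel_measurable lborel" for i
    unfolding G_def by (cases "i = 0") (auto intro!: borel_measurable_indicator simp: borel_open)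
  have M: "M > 0" using R by (simp add: M_def)
  have U: "{..<n} = insert 0 {1..<n}" using n by auto
  have lower: "(\<Prod>i\<in>{..<n}. G i (x i)) \<le> ennreal (exp (- \<beta> * energy n \<alpha> R x))" for x
  proof (cases "M \<le> cmod (x 0) \<and> (\<forall>i\<in>{1..<n}. x i \<in> ball (of_real (2 * real i)) (1 / 2))")
    case True
    then have "K * cmod (x 0) powr - q \<le> exp (- \<beta> * energy n \<alpha> R x)"
      unfolding K_def q_def M_def using n \<alpha> \<beta> R by (intro exp_neg_beta_energy_ge_one_far) auto
    moreover have "ennreal K * ennreal (cmod (x 0) powr - q) = ennreal (K * cmod (x 0) powr - q)"
      by (rule ennreal_mult[symmetric]) (simp_all add: K_def)
    moreover have "(\<Prod>i\<in>{1..<n}. G i (x i)) = 1" using True by (intro prod.neutral) (auto simp: G_def)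
    ultimately show ?thesis
      unfolding U using True by (simp add: G_def ennreal_leI)
  next
    case False
    then have "\<exists>i\<in>{..<n}. G i (x i) = 0"
    proof (cases "M \<le> cmod (x 0)")
      case True
      with False obtain i where "i \<in> {1..<n}" "x i \<notin> ball (of_real (2 * real i)) (1 / 2)" by auto
      then show ?thesis by (intro bexI[of _ i]) (auto simp: G_def)
    qed (use n in \<open>auto simp: G_def\<close>)
    then show ?thesis by (subst prod_zero) auto
  qed
  have "(\<integral>\<^sup>+z. ennreal (cmod z powr - q) * indicator {z. M \<le> cmod z} z \<partial>lborel) = \<infinity>"
    using nn_integral_norm_powr_tail_finite_iff[OF M, of q] le2 by (simp add: q_def top.not_eq_extremum[symmetric])
  moreover have "G 0 = (\<lambda>z. ennreal K * (ennreal (cmod z powr - q) * indicator {z. M \<le> cmod z} z))"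
    by (simp add: G_def)
  ultimately have G0: "integral\<^sup>N lborel (G 0) = \<infinity>"
    by (simp add: nn_integral_cmult K_def ennreal_mult_top)
  have "integral\<^sup>N lborel (G i) = ennreal (pi / 4)" if "i \<in> {1..<n}" for i
  proof -
    have "G i = indicator (ball (of_real (2 * real i)) (1 / 2))" using that by (auto simp: G_def)
    then show ?thesis by (simp add: emeasure_lborel_ball_complex power2_eq_square)
  qed
  then have "(\<Prod>i\<in>{1..<n}. integral\<^sup>N lborel (G i)) = ennreal (pi / 4) ^ (n - 1)" by simp
  then have "(\<Prod>i\<in>{..<n}. integral\<^sup>N lborel (G i)) = \<infinity>"
    unfolding U using G0 by (simp add: ennreal_power)
  moreover have "(\<Prod>i\<in>{..<n}. integral\<^sup>N lborel (G i)) = (\<integral>\<^sup>+x. (\<Prod>i\<in>{..<n}. G i (x i)) \<partial>PiM {..<n} (\<lambda>_. lborel))"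
    by (rule product_nn_integral_prod[symmetric]) simp_all
  moreover have "\<dots> \<le> partition_fn n \<beta> \<alpha> R"
    unfolding partition_fn_def by (intro nn_integral_mono lower)
  ultimately show ?thesis by (simp add: top_unique)
qed

theorem lemma1p1:
  fixes n :: nat and \<alpha> \<beta> R :: real
  assumes "n \<ge> 2" and "\<alpha> > 0" and "\<beta> > 0" and "R > 0"
  shows "(partition_fn n \<beta> \<alpha> R < \<infinity> \<longleftrightarrow> \<alpha> - real n > 2 / \<beta> - 1)
    \<and> (\<forall>x. ext_pot n \<alpha> R x =
          (\<alpha> / (2 * real n)) * ((cmod x)\<^sup>2 / R\<^sup>2 - 1 + 2 * ln R) * indicator {x. cmod x \<le> R} x
        + (\<alpha> / real n) * ln (cmod x) * indicator {x. cmod x > R} x)"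
proof
  have "\<alpha> - real n > 2 / \<beta> - 1 \<longleftrightarrow> 2 / \<beta> < \<alpha> - real n + 1" by linarith
  also have "\<dots> \<longleftrightarrow> \<beta> * (\<alpha> - real n + 1) > 2"
    using assms(3) by (simp add: divide_less_eq mult.commute)
  finally have iff: "\<alpha> - real n > 2 / \<beta> - 1 \<longleftrightarrow> \<beta> * (\<alpha> - real n + 1) > 2" .
  show "partition_fn n \<beta> \<alpha> R < \<infinity> \<longleftrightarrow> \<alpha> - real n > 2 / \<beta> - 1"
  proof (cases "\<beta> * (\<alpha> - real n + 1) > 2")
    case True
    then show ?thesis using partition_fn_finite[OF assms True] iff by simp
  next
    case False
    then show ?thesis using partition_fn_infinite[OF assms] iff by simp
  qed
  show "\<forall>x. ext_pot n \<alpha> R x =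
          (\<alpha> / (2 * real n)) * ((cmod x)\<^sup>2 / R\<^sup>2 - 1 + 2 * ln R) * indicator {x. cmod x \<le> R} x
        + (\<alpha> / real n) * ln (cmod x) * indicator {x. cmod x > R} x"
    using ext_pot_eq[OF assms(4)] by blast
qed

end
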